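(* Let $n\geq 1$ and let $C_n\subset A^n$ be an arbitrary nonempty set. Write $D=E_{P^n}[\rho_n(X_1^n,C_n)]$, where $X_1^n=(X_1,\dots,X_n)$ has the product distribution $P^n$. Then $$\frac{1}{n}\log M^n(C_n)\geq R(D).$$
   Context: Setting: $A$ is a finite set; $P$ is a probability mass function on $A$ with $P(a)>0$ for all $a\in A$; $\rho:A\times A\to[0,\infty)$ is a function such that for each $a\in A$ there is $b\in A$ with $\rho(a,b)=0$; $M:A\to(0,\infty)$ is an arbitrary positive "mass" function. For $n\geq1$ and $x_1^n=(x_1,\dots,x_n),y_1^n\in A^n$, $\rho_n(x_1^n,y_1^n)=\frac1n\sum_{i=1}^n\rho(x_i,y_i)$; $M^n(y_1^n)=\prod_{i=1}^n M(y_i)$ and $M^n(C)=\sum_{y_1^n\in C}M^n(y_1^n)$ for $C\subset A^n$; $P^n$ is the product distribution on $A^n$. For $C\subset A^n$, $\rho_n(x_1^n,C)=\min_{y_1^n\in C}\rho_n(x_1^n,y_1^n)$. Logarithms are natural. For probability mass functions $\mu,\nu$ on a finite set $S$, $H(\mu\|\nu)=\sum_s\mu(s)\log\frac{\mu(s)}{\nu(s)}$. For a probability measure $Q$ on $A$ and $D\geq0$, ${\cal M}(P,Q,D)$ is the set of probability measures $W$ on $A\times A$ with first marginal $P$, second marginal $Q$, and $E_W[\rho(X,Y)]\leq D$; $I(P,Q,D)=\inf_{W\in{\cal M}(P,Q,D)}H(W\|P\times Q)$ (equal to $+\infty$ if the set is empty). The rate function is $R(D)=R(D;P,M)=\inf_Q\{I(P,Q,D)+E_Q[\log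 M(Y)]\}$, the infimum over all probability distributions $Q$ on $A$; equivalently $R(D)=\inf\{I(X;Y)+E[\log M(Y)]\}$ over jointly distributed $(X,Y)$ with $X\sim P$ and $E\rho(X,Y)\le D$, where $I(X;Y)$ is mutual information. *)

theory Defs
  imports "HOL-Analysis.Analysis"
begin

text \<open>Probability mass functions on a finite carrier set S, represented as real-valued functions
  (values outside S are irrelevant).\<close>
definition is_pmf_on :: "'b set \<Rightarrow> ('b \<Rightarrow> real) \<Rightarrow> bool" where
  "is_pmf_on S \<mu> \<longleftrightarrow> (\<forall>s\<in>S. 0 \<le> \<mu> s) \<and> (\<Sum>s\<in>S. \<mu> s) = 1"

definition rel_entropy :: "'b set \<Rightarrow> ('b \<Rightarrow> real) \<Rightarrow> ('b \<Rightarrow> real) \<Rightarrow> real" where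
  "rel_entropy S \<mu> \<nu> = (\<Sum>s\<in>S. if \<mu> s = 0 then 0 else \<mu> s * ln (\<mu> s / \<nu> s))"

definition couplings :: "'a set \<Rightarrow> ('a \<Rightarrow> 'a \<Rightarrow> real) \<Rightarrow> ('a \<Rightarrow> real) \<Rightarrow> ('a \<Rightarrow> real) \<Rightarrow> real
    \<Rightarrow> ('a \<times> 'a \<Rightarrow> real) set" where
  "couplings A \<rho> P Q D = {W. is_pmf_on (A \<times> A) W
      \<and> (\<forall>a\<in>A. (\<Sum>b\<in>A. W (a, b)) = P a)
      \<and> (\<forall>b\<in>A. (\<Sum>a\<in>A. W (a, b)) = Q b)
      \<and> (\<Sum>p\<in>A \<times> A. W p * \<rho> (fst p) (snd p)) \<le> D}"

text \<open>I(P,Q,D) = inf over couplings of H(W || P x Q); +infinity if there is no coupling.\<close>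
definition I_PQD :: "'a set \<Rightarrow> ('a \<Rightarrow> 'a \<Rightarrow> real) \<Rightarrow> ('a \<Rightarrow> real) \<Rightarrow> ('a \<Rightarrow> real) \<Rightarrow> real \<Rightarrow> ereal" where
  "I_PQD A \<rho> P Q D = Inf ((\<lambda>W. ereal (rel_entropy (A \<times> A) W (\<lambda>p. P (fst p) * Q (snd p))))
                              ` couplings A \<rho> P Q D)"

definition rate_fun :: "'a set \<Rightarrow> ('a \<Rightarrow> 'a \<Rightarrow> real) \<Rightarrow> ('a \<Rightarrow> real) \<Rightarrow> ('a \<Rightarrow> real) \<Rightarrow> real \<Rightarrow> ereal" where
  "rate_fun A \<rho> P M D = (INF Q \<in> {Q. is_pmf_on A Q}.
       I_PQD A \<rho> P Q D + ereal (\<Sum>b\<in>A. Q b * ln (M b)))"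

definition words :: "'a set \<Rightarrow> nat \<Rightarrow> (nat \<Rightarrow> 'a) set" where
  "words A n = PiE {..<n} (\<lambda>_. A)"

definition rho_n :: "('a \<Rightarrow> 'a \<Rightarrow> real) \<Rightarrow> nat \<Rightarrow> (nat \<Rightarrow> 'a) \<Rightarrow> (nat \<Rightarrow> 'a) \<Rightarrow> real" where
  "rho_n \<rho> n x y = (1 / real n) * (\<Sum>i<n. \<rho> (x i) (y i))"

definition rho_n_set :: "('a \<Rightarrow> 'a \<Rightarrow> real) \<Rightarrow> nat \<Rightarrow> (nat \<Rightarrow> 'a) \<Rightarrow> (nat \<Rightarrow> 'a) set \<Rightarrow> real" where
  "rho_n_set \<rho> n x C = Min ((\<lambda>y. rho_n \<rho> n x y) ` C)"

definition prod_n :: "('a \<Rightarrow> real) \<Rightarrow> nat \<Rightarrow> (nat \<Rightarrow> 'a) \<Rightarrow> real" where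
  "prod_n M n y = (\<Prod>i<n. M (y i))"

definition mass_n :: "('a \<Rightarrow> real) \<Rightarrow> nat \<Rightarrow> (nat \<Rightarrow> 'a) set \<Rightarrow> real" where
  "mass_n M n C = (\<Sum>y\<in>C. prod_n M n y)"

definition avg_dist :: "'a set \<Rightarrow> ('a \<Rightarrow> 'a \<Rightarrow> real) \<Rightarrow> ('a \<Rightarrow> real) \<Rightarrow> nat \<Rightarrow> (nat \<Rightarrow> 'a) set \<Rightarrow> real" where
  "avg_dist A \<rho> P n C = (\<Sum>x\<in>words A n. prod_n P n x * rho_n_set \<rho> n x C)"

end

theory Submission
  imports Defs
begin

text \<open>Let \<open>f\<close> map each word to a nearest codeword. For \<open>X\<close> distributed as
  \<open>P\<^sup>n\<close>, let \<open>W\<^sub>i\<close> (\<open>joint_law i\<close>) be the law of \<open>(X\<^sub>i, f(X)\<^sub>i)\<close> and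
  \<open>Q\<^sub>i\<close> (\<open>output_law i\<close>) the law of \<open>f(X)\<^sub>i\<close>. The average of the \<open>W\<^sub>i\<close> couples
  \<open>P\<close> with the average of the \<open>Q\<^sub>i\<close> at expected distortion exactly \<open>D\<close>, so by joint
  convexity of relative entropy (the log-sum inequality) \<open>R(D)\<close> is at most the average of
  the terms \<open>H(W\<^sub>i \<parallel> P \<times> Q\<^sub>i) + E\<^sub>Q\<^sub>i log M\<close> (\<open>coord_cost i\<close>).
  Their sum equals \<open>E log (G(X) / P\<^sup>n(X))\<close> for the \<open>code_weight\<close>
  \<open>G(x) = \<Prod>\<^sub>i W\<^sub>i(x\<^sub>i, y\<^sub>i) M(y\<^sub>i) / Q\<^sub>i(y\<^sub>i)\<close>, \<open>y = f(x)\<close>,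
  hence by Jensen it is at most \<open>log \<Sum>\<^sub>x G(x)\<close>. Finally the sum of \<open>G\<close> over the
  fibre of a codeword \<open>y\<close> is at most \<open>M\<^sup>n(y)\<close>, because each
  \<open>a \<mapsto> W\<^sub>i(a, y\<^sub>i) / Q\<^sub>i(y\<^sub>i)\<close> sums to at most one; so \<open>\<Sum>\<^sub>x G(x) \<le> M\<^sup>n(C)\<close>.\<close>

lemma rel_entropy_eq_sum:
  "rel_entropy S \<mu> \<nu> = (\<Sum>s\<in>S. \<mu> s * ln (\<mu> s / \<nu> s))"
  unfolding rel_entropy_def by (intro sum.cong) auto

lemma mult_ln_ratio_ge_affine:
  fixes w u t :: real
  assumes "0 \<le> w" "0 \<le> u" "w > 0 \<longrightarrow> u > 0" "t > 0"
  shows "w * ln t + w - u * t \<le> w * ln (w / u)"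
proof (cases "w = 0")
  case True
  then show ?thesis using assms by simp
next
  case False
  then have w: "w > 0" and u: "u > 0" using assms by auto
  have "w * ln (u * t / w) \<le> w * (u * t / w - 1)"
    using w u assms(4) by (intro mult_left_mono ln_le_minus_one) auto
  also have "\<dots> = u * t - w" using w by (simp add: field_simps)
  also have "ln (u * t / w) = ln t - ln (w / u)"
    using w u assms(4) by (simp add: ln_div ln_mult)
  finally show ?thesis by (simp add: algebra_simps)
qed

lemma log_sum_inequality:
  fixes w u :: "'i \<Rightarrow> real"
  assumes "finite I" and "\<forall>i\<in>I. 0 \<le> w i \<and> 0 \<le> u i \<and> (w i > 0 \<longrightarrow> u i > 0)"
  shows "sum w I * ln (sum w I / sum u I) \<le> (\<Sum>i\<in>I. w i * ln (w i / u i))"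
proof (cases "sum w I = 0")
  case True
  then show ?thesis using assms by (simp add: sum_nonneg_eq_0_iff)
next
  case False
  define t where "t = sum w I / sum u I"
  obtain j where j: "j \<in> I" "w j > 0"
    using False assms by (metis less_eq_real_def sum.neutral)
  have "sum u I > 0" using j assms by (intro sum_pos2[of I j]) auto
  moreover have "sum w I > 0" using False assms by (simp add: sum_nonneg order_less_le)
  ultimately have t: "t > 0" and "(\<Sum>i\<in>I. u i * t) = sum w I"
    unfolding t_def sum_distrib_right[symmetric] by auto
  then have "sum w I * ln t = (\<Sum>i\<in>I. w i * ln t + w i - u i * t)"
    by (simp add: sum.distrib sum_subtractf sum_distrib_right)
  also have "\<dots> \<le> (\<Sum>i\<in>I. w i * ln (w i / u i))"
    using assms t by (intro sum_mono mult_ln_ratio_ge_affine) auto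
  finally show ?thesis unfolding t_def .
qed

lemma rel_entropy_mean_le_mean:
  fixes \<mu> \<nu> :: "nat \<Rightarrow> 'b \<Rightarrow> real"
  assumes "finite S" "n > 0"
    and "\<forall>i<n. \<forall>s\<in>S. 0 \<le> \<mu> i s \<and> 0 \<le> \<nu> i s \<and> (\<mu> i s > 0 \<longrightarrow> \<nu> i s > 0)"
  shows "rel_entropy S (\<lambda>s. (\<Sum>i<n. \<mu> i s) / n) (\<lambda>s. (\<Sum>i<n. \<nu> i s) / n)
           \<le> (\<Sum>i<n. rel_entropy S (\<mu> i) (\<nu> i)) / n"
proof -
  have "(\<Sum>i<n. \<mu> i s) / n * ln ((\<Sum>i<n. \<mu> i s) / n / ((\<Sum>i<n. \<nu> i s) / n))
          \<le> (\<Sum>i<n. \<mu> i s * ln (\<mu> i s / \<nu> i s)) / n" if "s \<in> S" for s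
  proof -
    have "(\<Sum>i<n. \<mu> i s) * ln ((\<Sum>i<n. \<mu> i s) / (\<Sum>i<n. \<nu> i s))
            \<le> (\<Sum>i<n. \<mu> i s * ln (\<mu> i s / \<nu> i s))"
      using assms that by (intro log_sum_inequality) auto
    then show ?thesis using assms(2) by (simp add: divide_right_mono)
  qed
  then have "rel_entropy S (\<lambda>s. (\<Sum>i<n. \<mu> i s) / n) (\<lambda>s. (\<Sum>i<n. \<nu> i s) / n)
               \<le> (\<Sum>s\<in>S. (\<Sum>i<n. \<mu> i s * ln (\<mu> i s / \<nu> i s)) / n)"
    unfolding rel_entropy_eq_sum by (intro sum_mono)
  also have "\<dots> = (\<Sum>i<n. rel_entropy S (\<mu> i) (\<nu> i)) / n"
    unfolding rel_entropy_eq_sum by (simp add: sum_divide_distrib[symmetric] sum.swap[of _ S])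
  finally show ?thesis .
qed

lemma sum_mult_ln_ratio_le_ln_sum:
  fixes p g :: "'s \<Rightarrow> real"
  assumes "finite S" "sum p S = 1" "\<forall>s\<in>S. 0 \<le> p s \<and> 0 < g s"
  shows "(\<Sum>s\<in>S. p s * ln (g s / p s)) \<le> ln (sum g S)"
proof -
  have "S \<noteq> {}" using assms(2) by auto
  then have g: "sum g S > 0" using assms by (intro sum_pos) auto
  have "sum p S * ln (sum p S / sum g S) \<le> (\<Sum>s\<in>S. p s * ln (p s / g s))"
    using assms by (intro log_sum_inequality) auto
  also have "\<dots> = - (\<Sum>s\<in>S. p s * ln (g s / p s))"
    using assms by (auto simp: sum_negf[symmetric] ln_div less_le algebra_simps intro!: sum.cong)
  finally show ?thesis using assms(2) g by (simp add: ln_div)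
qed

definition pushforward :: "'s set \<Rightarrow> ('s \<Rightarrow> 't) \<Rightarrow> ('s \<Rightarrow> real) \<Rightarrow> 't \<Rightarrow> real" where
  "pushforward S \<phi> w t = (\<Sum>s\<in>{s\<in>S. \<phi> s = t}. w s)"

lemma sum_pushforward_mult:
  assumes "finite S" "finite T" "\<phi> ` S \<subseteq> T"
  shows "(\<Sum>t\<in>T. pushforward S \<phi> w t * h t) = (\<Sum>s\<in>S. w s * h (\<phi> s))"
proof -
  have "(\<Sum>s\<in>S. w s * h (\<phi> s)) = (\<Sum>t\<in>T. \<Sum>s\<in>{s\<in>S. \<phi> s = t}. w s * h (\<phi> s))"
    using sum.group[OF assms, of "\<lambda>s. w s * h (\<phi> s)"] by simp
  also have "\<dots> = (\<Sum>t\<in>T. pushforward S \<phi> w t * h t)"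
    unfolding pushforward_def by (auto simp: sum_distrib_right intro!: sum.cong)
  finally show ?thesis by simp
qed

lemma sum_pushforward:
  assumes "finite S" "finite T" "\<phi> ` S \<subseteq> T"
  shows "(\<Sum>t\<in>T. pushforward S \<phi> w t) = (\<Sum>s\<in>S. w s)"
  using sum_pushforward_mult[OF assms, of w "\<lambda>_. 1"] by simp

lemma pushforward_nonneg: "\<forall>s\<in>S. 0 \<le> w s \<Longrightarrow> 0 \<le> pushforward S \<phi> w t"
  unfolding pushforward_def by (intro sum_nonneg) auto

lemma pushforward_pos:
  assumes "finite S" "\<forall>s\<in>S. 0 \<le> w s" "s \<in> S" "w s > 0"
  shows "pushforward S \<phi> w (\<phi> s) > 0"
proof -
  have "w s \<le> pushforward S \<phi> w (\<phi> s)"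
    unfolding pushforward_def using assms by (intro member_le_sum) auto
  then show ?thesis using assms(4) by simp
qed

lemma pushforward_le_pushforward_comp:
  assumes "finite S" "\<forall>s\<in>S. 0 \<le> w s"
  shows "pushforward S \<phi> w t \<le> pushforward S (g \<circ> \<phi>) w (g t)"
  unfolding pushforward_def using assms by (intro sum_mono2) auto

lemma pushforward_pair_eq_restrict:
  "pushforward S (\<lambda>s. (\<phi> s, \<psi> s)) w (a, b) = pushforward {s\<in>S. \<phi> s = a} \<psi> w b"
  unfolding pushforward_def by (intro sum.cong) auto

lemma sum_pushforward_pair_snd:
  assumes "finite S" "finite T" "\<psi> ` S \<subseteq> T"
  shows "(\<Sum>b\<in>T. pushforward S (\<lambda>s. (\<phi> s, \<psi> s)) w (a, b)) = pushforward S \<phi> w a"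
  unfolding pushforward_pair_eq_restrict using assms
  by (subst sum_pushforward) (auto simp: pushforward_def)

lemma sum_pushforward_pair_fst:
  assumes "finite S" "finite T" "\<phi> ` S \<subseteq> T"
  shows "(\<Sum>a\<in>T. pushforward S (\<lambda>s. (\<phi> s, \<psi> s)) w (a, b)) = pushforward S \<psi> w b"
proof -
  have "pushforward S (\<lambda>s. (\<phi> s, \<psi> s)) w (a, b) = pushforward {s\<in>S. \<psi> s = b} \<phi> w a" for a
    unfolding pushforward_def by (intro sum.cong) auto
  moreover have "(\<Sum>a\<in>T. pushforward {s\<in>S. \<psi> s = b} \<phi> w a) = pushforward S \<psi> w b"
    using assms by (subst sum_pushforward) (auto simp: pushforward_def)
  ultimately show ?thesis by simp
qed

lemma finite_words: "finite A \<Longrightarrow> finite (words A n)"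
  unfolding words_def by (simp add: finite_PiE)

lemma words_coord_in: "x \<in> words A n \<Longrightarrow> i < n \<Longrightarrow> x i \<in> A"
  unfolding words_def by (auto simp: PiE_iff)

lemma sum_words_prod:
  fixes g :: "nat \<Rightarrow> 'a \<Rightarrow> real"
  assumes "finite A"
  shows "(\<Sum>x\<in>words A n. \<Prod>i<n. g i (x i)) = (\<Prod>i<n. \<Sum>a\<in>A. g i a)"
  unfolding words_def using prod_sum_PiE[of "{..<n}" "\<lambda>_. A" g] assms by simp

lemma prod_n_pos: "\<forall>a\<in>A. P a > 0 \<Longrightarrow> x \<in> words A n \<Longrightarrow> prod_n P n x > 0"
  unfolding prod_n_def by (intro prod_pos) (auto simp: words_coord_in)

lemma sum_prod_n_words:
  assumes "finite A" "is_pmf_on A P"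
  shows "(\<Sum>x\<in>words A n. prod_n P n x) = 1"
  using sum_words_prod[OF assms(1), of "\<lambda>_. P" n] assms(2)
  unfolding prod_n_def is_pmf_on_def by simp

lemma pushforward_coord_prod_n:
  assumes "finite A" "is_pmf_on A P" "i < n" "a \<in> A"
  shows "pushforward (words A n) (\<lambda>x. x i) (prod_n P n) a = P a"
proof -
  define g where "g j c = (if j = i then (if c = a then P c else 0) else P c)" for j c
  have "pushforward (words A n) (\<lambda>x. x i) (prod_n P n) a
          = (\<Sum>x\<in>words A n. if x i = a then prod_n P n x else 0)"
    unfolding pushforward_def using assms(1) by (simp add: sum.If_cases finite_words Int_def)
  also have "\<dots> = (\<Sum>x\<in>words A n. \<Prod>j<n. g j (x j))"
    using assms(3) by (intro sum.cong) (auto simp: prod_n_def g_def prod_zero_iff intro!: prod.cong)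
  also have "\<dots> = (\<Prod>j<n. \<Sum>c\<in>A. g j c)" by (rule sum_words_prod[OF assms(1)])
  also have "\<dots> = (\<Prod>j<n. if j = i then P a else 1)"
    using assms unfolding g_def is_pmf_on_def by (intro prod.cong) (auto simp: sum.delta)
  also have "\<dots> = P a" using assms(3) by (simp add: prod.delta)
  finally show ?thesis .
qed

locale code_map =
  fixes A :: "'a set" and P M :: "'a \<Rightarrow> real" and n :: nat
    and C :: "(nat \<Rightarrow> 'a) set" and f :: "(nat \<Rightarrow> 'a) \<Rightarrow> nat \<Rightarrow> 'a"
  assumes finite_A: "finite A"
    and pmf_P: "is_pmf_on A P" and P_pos: "\<forall>a\<in>A. P a > 0"
    and M_pos: "\<forall>a\<in>A. M a > 0" and n_pos: "n > 0"
    and C_words: "C \<subseteq> words A n" and f_into_C: "f ` words A n \<subseteq> C"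
begin

definition joint_law :: "nat \<Rightarrow> 'a \<times> 'a \<Rightarrow> real" where
  "joint_law i = pushforward (words A n) (\<lambda>x. (x i, f x i)) (prod_n P n)"

definition output_law :: "nat \<Rightarrow> 'a \<Rightarrow> real" where
  "output_law i = pushforward (words A n) (\<lambda>x. f x i) (prod_n P n)"

definition coord_cost :: "nat \<Rightarrow> real" where
  "coord_cost i = rel_entropy (A \<times> A) (joint_law i) (\<lambda>ab. P (fst ab) * output_law i (snd ab))
                    + (\<Sum>b\<in>A. output_law i b * ln (M b))"

definition code_weight :: "(nat \<Rightarrow> 'a) \<Rightarrow> real" where
  "code_weight x = (\<Prod>i<n. joint_law i (x i, f x i) * M (f x i) / output_law i (f x i))"

lemma finite_C: "finite C"
  using C_words finite_A finite_subset finite_words by blast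

lemma f_coord_in: "x \<in> words A n \<Longrightarrow> i < n \<Longrightarrow> f x i \<in> A"
  using f_into_C C_words words_coord_in by blast

lemma prod_n_P_nonneg: "\<forall>x\<in>words A n. 0 \<le> prod_n P n x"
  using prod_n_pos[OF P_pos] by (simp add: less_imp_le)

lemma joint_law_nonneg: "0 \<le> joint_law i ab"
  unfolding joint_law_def by (rule pushforward_nonneg[OF prod_n_P_nonneg])

lemma output_law_nonneg: "0 \<le> output_law i b"
  unfolding output_law_def by (rule pushforward_nonneg[OF prod_n_P_nonneg])

lemma joint_law_le_output_law: "joint_law i (a, b) \<le> output_law i b"
  using pushforward_le_pushforward_comp[OF finite_words[OF finite_A] prod_n_P_nonneg,
      of "\<lambda>x. (x i, f x i)" "(a, b)" snd]
  unfolding joint_law_def output_law_def by (simp add: comp_def)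

lemma joint_law_pos: "x \<in> words A n \<Longrightarrow> joint_law i (x i, f x i) > 0"
  unfolding joint_law_def
  by (rule pushforward_pos[OF finite_words[OF finite_A] prod_n_P_nonneg _ prod_n_pos[OF P_pos]])

lemma output_law_pos: "x \<in> words A n \<Longrightarrow> output_law i (f x i) > 0"
  using joint_law_pos joint_law_le_output_law less_le_trans by blast

lemma sum_joint_law_snd: "i < n \<Longrightarrow> a \<in> A \<Longrightarrow> (\<Sum>b\<in>A. joint_law i (a, b)) = P a"
  unfolding joint_law_def
  by (simp add: sum_pushforward_pair_snd finite_words finite_A f_coord_in image_subset_iff
      pushforward_coord_prod_n pmf_P)

lemma sum_joint_law_fst: "i < n \<Longrightarrow> (\<Sum>a\<in>A. joint_law i (a, b)) = output_law i b"
  unfolding joint_law_def output_law_def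
  by (simp add: sum_pushforward_pair_fst finite_words finite_A words_coord_in image_subset_iff)

lemma sum_output_law: "i < n \<Longrightarrow> (\<Sum>b\<in>A. output_law i b) = 1"
  unfolding output_law_def
  by (simp add: sum_pushforward finite_words finite_A f_coord_in image_subset_iff
      sum_prod_n_words pmf_P)

lemma sum_joint_law_mult:
  "i < n \<Longrightarrow> (\<Sum>ab\<in>A \<times> A. joint_law i ab * h ab)
                = (\<Sum>x\<in>words A n. prod_n P n x * h (x i, f x i))"
  unfolding joint_law_def
  by (rule sum_pushforward_mult) (auto simp: finite_words finite_A words_coord_in f_coord_in)

lemma sum_output_law_mult:
  "i < n \<Longrightarrow> (\<Sum>b\<in>A. output_law i b * h b) = (\<Sum>x\<in>words A n. prod_n P n x * h (f x i))"
  unfolding output_law_def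
  by (rule sum_pushforward_mult) (auto simp: finite_words finite_A f_coord_in)

lemma mean_joint_law_in_couplings:
  "(\<lambda>ab. (\<Sum>i<n. joint_law i ab) / n)
     \<in> couplings A \<rho> P (\<lambda>b. (\<Sum>i<n. output_law i b) / n)
         (\<Sum>x\<in>words A n. prod_n P n x * rho_n \<rho> n x (f x))"
proof -
  have "(\<Sum>ab\<in>A \<times> A. (\<Sum>i<n. joint_law i ab) / n) = (\<Sum>i<n. sum (joint_law i) (A \<times> A)) / n"
    by (simp add: sum_divide_distrib[symmetric] sum.swap[of _ "A \<times> A"])
  then have total: "(\<Sum>ab\<in>A \<times> A. (\<Sum>i<n. joint_law i ab) / n) = 1"
    using sum_joint_law_mult[of _ "\<lambda>_. 1"] n_pos by (simp add: sum_prod_n_words finite_A pmf_P)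
  have marg_fst: "(\<Sum>b\<in>A. (\<Sum>i<n. joint_law i (a, b)) / n) = P a" if "a \<in> A" for a
    using sum_joint_law_snd that n_pos
    by (simp add: sum_divide_distrib[symmetric] sum.swap[of "\<lambda>b i. joint_law i (a, b)"])
  have marg_snd: "(\<Sum>a\<in>A. (\<Sum>i<n. joint_law i (a, b)) / n) = (\<Sum>i<n. output_law i b) / n"
    for b
    using sum_joint_law_fst
    by (simp add: sum_divide_distrib[symmetric] sum.swap[of "\<lambda>a i. joint_law i (a, b)"])
  have "(\<Sum>ab\<in>A \<times> A. (\<Sum>i<n. joint_law i ab) / n * \<rho> (fst ab) (snd ab))
          = (\<Sum>i<n. \<Sum>ab\<in>A \<times> A. joint_law i ab * \<rho> (fst ab) (snd ab)) / n"
    by (simp add: sum_divide_distrib[symmetric] sum_distrib_right sum.swap[of _ "A \<times> A"])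
  also have "\<dots> = (\<Sum>i<n. \<Sum>x\<in>words A n. prod_n P n x * \<rho> (x i) (f x i)) / n"
    by (simp add: sum_joint_law_mult)
  also have "\<dots> = (\<Sum>x\<in>words A n. prod_n P n x * rho_n \<rho> n x (f x))"
    unfolding rho_n_def
    by (simp add: sum.swap[of _ "words A n"] sum_distrib_left sum_divide_distrib[symmetric])
  finally show ?thesis
    unfolding couplings_def is_pmf_on_def
    using total marg_fst marg_snd joint_law_nonneg by (simp add: sum_nonneg)
qed

lemma mean_output_law_pmf: "is_pmf_on A (\<lambda>b. (\<Sum>i<n. output_law i b) / n)"
proof -
  have "(\<Sum>b\<in>A. (\<Sum>i<n. output_law i b) / n) = (\<Sum>i<n. \<Sum>b\<in>A. output_law i b) / n"
    by (simp add: sum_divide_distrib[symmetric] sum.swap[of "\<lambda>b i. output_law i b"])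
  then show ?thesis
    unfolding is_pmf_on_def using n_pos output_law_nonneg by (simp add: sum_output_law sum_nonneg)
qed

lemma rate_fun_le_mean_coord_cost:
  "rate_fun A \<rho> P M (\<Sum>x\<in>words A n. prod_n P n x * rho_n \<rho> n x (f x))
     \<le> ereal ((\<Sum>i<n. coord_cost i) / n)"
proof -
  define D where "D = (\<Sum>x\<in>words A n. prod_n P n x * rho_n \<rho> n x (f x))"
  define W where "W ab = (\<Sum>i<n. joint_law i ab) / n" for ab
  define Q where "Q b = (\<Sum>i<n. output_law i b) / n" for b
  define H where "H = rel_entropy (A \<times> A) W (\<lambda>ab. P (fst ab) * Q (snd ab))"
  have "H = rel_entropy (A \<times> A) (\<lambda>ab. (\<Sum>i<n. joint_law i ab) / n)
              (\<lambda>ab. (\<Sum>i<n. P (fst ab) * output_law i (snd ab)) / n)"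
    unfolding H_def W_def Q_def by (simp add: sum_distrib_left)
  also have "\<dots> \<le> (\<Sum>i<n. rel_entropy (A \<times> A) (joint_law i)
                      (\<lambda>ab. P (fst ab) * output_law i (snd ab))) / n"
    using n_pos joint_law_nonneg output_law_nonneg P_pos joint_law_le_output_law
    by (intro rel_entropy_mean_le_mean) (auto simp: finite_A less_le_trans)
  finally have convex: "H + (\<Sum>b\<in>A. Q b * ln (M b)) \<le> (\<Sum>i<n. coord_cost i) / n"
    unfolding coord_cost_def Q_def
    by (simp add: sum.distrib add_divide_distrib sum_divide_distrib[symmetric] sum_distrib_right
        sum.swap[of "\<lambda>b i. output_law i b * ln (M b)"])
  have I_le: "I_PQD A \<rho> P Q D \<le> ereal H"
    unfolding I_PQD_def H_def D_def W_def Q_def by (intro INF_lower mean_joint_law_in_couplings)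
  have "rate_fun A \<rho> P M D \<le> I_PQD A \<rho> P Q D + ereal (\<Sum>b\<in>A. Q b * ln (M b))"
    unfolding rate_fun_def Q_def using mean_output_law_pmf by (intro INF_lower) simp
  also have "\<dots> \<le> ereal H + ereal (\<Sum>b\<in>A. Q b * ln (M b))"
    using I_le by (rule add_right_mono)
  also have "\<dots> \<le> ereal ((\<Sum>i<n. coord_cost i) / n)"
    using convex by simp
  finally show ?thesis unfolding D_def .
qed

lemma ln_code_weight_div:
  assumes x: "x \<in> words A n"
  shows "ln (code_weight x / prod_n P n x)
           = (\<Sum>i<n. ln (joint_law i (x i, f x i) / (P (x i) * output_law i (f x i)))
                      + ln (M (f x i)))"
proof -
  define r where "r i = joint_law i (x i, f x i) / (P (x i) * output_law i (f x i))" for i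
  have pos: "r i > 0" "M (f x i) > 0" if "i < n" for i
    unfolding r_def
    using joint_law_pos[OF x] output_law_pos[OF x] P_pos M_pos
      words_coord_in[OF x that] f_coord_in[OF x that]
    by (auto intro!: divide_pos_pos mult_pos_pos)
  have "code_weight x / prod_n P n x = (\<Prod>i<n. r i * M (f x i))"
    unfolding code_weight_def prod_n_def prod_dividef[symmetric] r_def
    by (intro prod.cong) (auto simp: field_simps)
  also have "ln \<dots> = (\<Sum>i<n. ln (r i * M (f x i)))"
    using pos by (intro ln_prod) force+
  also have "\<dots> = (\<Sum>i<n. ln (r i) + ln (M (f x i)))"
    using pos by (intro sum.cong refl ln_mult_pos) auto
  finally show ?thesis unfolding r_def .
qed

lemma sum_coord_cost_eq:
  "(\<Sum>i<n. coord_cost i) = (\<Sum>x\<in>words A n. prod_n P n x * ln (code_weight x / prod_n P n x))"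
proof -
  have "coord_cost i = (\<Sum>x\<in>words A n. prod_n P n x *
          (ln (joint_law i (x i, f x i) / (P (x i) * output_law i (f x i))) + ln (M (f x i))))"
    if "i < n" for i
    unfolding coord_cost_def rel_entropy_eq_sum
    using sum_joint_law_mult[OF that, of "\<lambda>ab. ln (joint_law i ab / (P (fst ab) * output_law i (snd ab)))"]
      sum_output_law_mult[OF that, of "\<lambda>b. ln (M b)"]
    by (simp add: distrib_left sum.distrib)
  then show ?thesis
    by (simp add: ln_code_weight_div sum_distrib_left sum.swap[of _ "words A n"])
qed

lemma sum_words_joint_law_ratio_le_1:
  "(\<Sum>x\<in>words A n. \<Prod>i<n. joint_law i (x i, y i) / output_law i (y i)) \<le> 1"
proof -
  have "(\<Sum>x\<in>words A n. \<Prod>i<n. joint_law i (x i, y i) / output_law i (y i))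
          = (\<Prod>i<n. \<Sum>a\<in>A. joint_law i (a, y i) / output_law i (y i))"
    by (rule sum_words_prod[OF finite_A])
  also have "\<dots> = (\<Prod>i<n. output_law i (y i) / output_law i (y i))"
    by (intro prod.cong refl) (simp add: sum_divide_distrib[symmetric] sum_joint_law_fst)
  also have "\<dots> \<le> 1"
    by (intro prod_le_1) auto
  finally show ?thesis .
qed

lemma pushforward_code_weight_le:
  assumes y: "y \<in> C"
  shows "pushforward (words A n) f code_weight y \<le> prod_n M n y"
proof -
  define K where "K x = (\<Prod>i<n. joint_law i (x i, y i) / output_law i (y i))" for x
  have M_y: "prod_n M n y \<ge> 0"
    using prod_n_pos[OF M_pos] y C_words by (auto simp: less_imp_le)
  have K_nonneg: "K x \<ge> 0" for x
    unfolding K_def using joint_law_nonneg output_law_nonneg by (simp add: prod_nonneg)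
  have "pushforward (words A n) f code_weight y
          = (\<Sum>x\<in>{x\<in>words A n. f x = y}. prod_n M n y * K x)"
    unfolding pushforward_def code_weight_def K_def prod_n_def
    by (intro sum.cong refl) (auto simp: prod.distrib[symmetric] intro!: prod.cong)
  also have "\<dots> \<le> (\<Sum>x\<in>words A n. prod_n M n y * K x)"
    using M_y K_nonneg by (intro sum_mono2) (auto simp: finite_words finite_A)
  also have "\<dots> \<le> prod_n M n y"
    unfolding K_def sum_distrib_left[symmetric]
    using mult_left_mono[OF sum_words_joint_law_ratio_le_1 M_y] by simp
  finally show ?thesis .
qed

lemma sum_code_weight_le_mass: "(\<Sum>x\<in>words A n. code_weight x) \<le> mass_n M n C"
proof -
  have "(\<Sum>x\<in>words A n. code_weight x) = (\<Sum>y\<in>C. pushforward (words A n) f code_weight y)"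
    by (simp add: sum_pushforward finite_words finite_A finite_C f_into_C)
  also have "\<dots> \<le> mass_n M n C"
    unfolding mass_n_def by (intro sum_mono pushforward_code_weight_le)
  finally show ?thesis .
qed

lemma rate_fun_le_code_rate:
  "rate_fun A \<rho> P M (\<Sum>x\<in>words A n. prod_n P n x * rho_n \<rho> n x (f x))
     \<le> ereal (ln (mass_n M n C) / n)"
proof -
  have weight_pos: "\<forall>x\<in>words A n. code_weight x > 0"
    unfolding code_weight_def
    using joint_law_pos output_law_pos M_pos f_coord_in
    by (auto intro!: prod_pos divide_pos_pos mult_pos_pos)
  have "(\<Sum>i<n. coord_cost i) \<le> ln (\<Sum>x\<in>words A n. code_weight x)"
    unfolding sum_coord_cost_eq
    using weight_pos prod_n_P_nonneg
    by (intro sum_mult_ln_ratio_le_ln_sum) (auto simp: finite_words finite_A sum_prod_n_words pmf_P)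
  also have "\<dots> \<le> ln (mass_n M n C)"
  proof -
    have "words A n \<noteq> {}"
      using sum_prod_n_words[OF finite_A pmf_P, of n] by auto
    then have "(\<Sum>x\<in>words A n. code_weight x) > 0"
      using weight_pos by (intro sum_pos) (auto simp: finite_words finite_A)
    then show ?thesis
      using sum_code_weight_le_mass by simp
  qed
  finally have "(\<Sum>i<n. coord_cost i) / n \<le> ln (mass_n M n C) / n"
    using n_pos by (simp add: divide_right_mono)
  then show ?thesis
    using rate_fun_le_mean_coord_cost[of \<rho>] by (simp add: order_trans)
qed

end

lemma rho_n_set_attained:
  assumes "finite C" "C \<noteq> {}"
  obtains g where "\<forall>x. g x \<in> C \<and> rho_n \<rho> n x (g x) = rho_n_set \<rho> n x C"
proof -
  have "rho_n_set \<rho> n x C \<in> (\<lambda>y. rho_n \<rho> n x y) ` C" for x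
    unfolding rho_n_set_def using assms by (intro Min_in) auto
  then have "\<exists>y\<in>C. rho_n \<rho> n x y = rho_n_set \<rho> n x C" for x
    by (metis imageE)
  then show ?thesis using that by metis
qed

theorem theorem1:
  fixes A :: "'a set" and P :: "'a \<Rightarrow> real" and \<rho> :: "'a \<Rightarrow> 'a \<Rightarrow> real"
    and M :: "'a \<Rightarrow> real" and n :: nat and C :: "(nat \<Rightarrow> 'a) set"
  assumes "finite A"
    and "is_pmf_on A P" and "\<forall>a\<in>A. P a > 0"
    and "\<forall>a\<in>A. \<forall>b\<in>A. \<rho> a b \<ge> 0"
    and "\<forall>a\<in>A. \<exists>b\<in>A. \<rho> a b = 0"
    and "\<forall>a\<in>A. M a > 0"
    and "n \<ge> 1"
    and "C \<subseteq> words A n" and "C \<noteq> {}"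
  shows "ereal ((1 / real n) * ln (mass_n M n C)) \<ge> rate_fun A \<rho> P M (avg_dist A \<rho> P n C)"
proof -
  have "finite C"
    using assms(1,8) finite_subset finite_words by blast
  then obtain g where g: "\<forall>x. g x \<in> C \<and> rho_n \<rho> n x (g x) = rho_n_set \<rho> n x C"
    using assms(9) rho_n_set_attained by blast
  interpret code_map A P M n C g
    using assms g by unfold_locales auto
  have "avg_dist A \<rho> P n C = (\<Sum>x\<in>words A n. prod_n P n x * rho_n \<rho> n x (g x))"
    unfolding avg_dist_def using g by simp
  then show ?thesis
    using rate_fun_le_code_rate[of \<rho>] by simp
qed

end
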